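(* Let $E$ be an $n$-dimensional normed space over $K$ such that $\dim_{K^\vee}E^\vee=1$. Then all $(n-1)$-dimensional normed spaces of the form $E/[u]$ with $u\in E\setminus\{0\}$ are isometrically isomorphic to each other.
   Context: $K$ is a complete non-archimedean non-trivially valued field which is not spherically complete; $K^\vee$ is a fixed spherically complete immediate extension of $K$. Normed spaces are finite-dimensional non-archimedean normed spaces over $K$; $[u]$ is the $K$-span of $u$ and $E/[u]$ has the quotient norm. A subset $X\subseteq E\setminus\{0\}$ is orthogonal if $\|\sum\lambda_ix_i\|=\max\|\lambda_ix_i\|$ for finitely many distinct $x_i\in X$, $\lambda_i\in K$; $\dim_{K^\vee}E^\vee$ denotes the cardinality of a maximal orthogonal subset of $E$. *)

theory Defs
  imports Complex_Main
begin

definition na_abs :: "('k::field \<Rightarrow> real) \<Rightarrow> bool" where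
  "na_abs av \<longleftrightarrow> (\<forall>x. av x \<ge> 0) \<and> (\<forall>x. av x = 0 \<longleftrightarrow> x = 0)
     \<and> (\<forall>x y. av (x * y) = av x * av y)
     \<and> (\<forall>x y. av (x + y) \<le> max (av x) (av y))"

definition abs_nontrivial :: "('k::field \<Rightarrow> real) \<Rightarrow> bool" where
  "abs_nontrivial av \<longleftrightarrow> (\<exists>x. av x \<noteq> 0 \<and> av x \<noteq> 1)"

definition abs_complete :: "('k::field \<Rightarrow> real) \<Rightarrow> bool" where
  "abs_complete av \<longleftrightarrow> (\<forall>X :: nat \<Rightarrow> 'k.
     (\<forall>e>0. \<exists>N. \<forall>m\<ge>N. \<forall>n\<ge>N. av (X m - X n) < e)
     \<longrightarrow> (\<exists>L. \<forall>e>0. \<exists>N. \<forall>n\<ge>N. av (X n - L) < e))"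

definition closed_ball_abs :: "('k::field \<Rightarrow> real) \<Rightarrow> 'k \<Rightarrow> real \<Rightarrow> 'k set" where
  "closed_ball_abs av c r = {y. av (y - c) \<le> r}"

definition spherically_complete :: "('k::field \<Rightarrow> real) \<Rightarrow> bool" where
  "spherically_complete av \<longleftrightarrow> (\<forall>\<C>. \<C> \<noteq> {}
      \<and> \<C> \<subseteq> {closed_ball_abs av c r | c r. r > 0}
      \<and> (\<forall>A\<in>\<C>. \<forall>B\<in>\<C>. A \<subseteq> B \<or> B \<subseteq> A)
      \<longrightarrow> \<Inter>\<C> \<noteq> {})"

definition na_norm :: "('k::field \<Rightarrow> real) \<Rightarrow> ('k \<Rightarrow> 'v::ab_group_add \<Rightarrow> 'v) \<Rightarrow> ('v \<Rightarrow> real) \<Rightarrow> bool" where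
  "na_norm av scale nv \<longleftrightarrow> (\<forall>x. nv x \<ge> 0) \<and> (\<forall>x. nv x = 0 \<longleftrightarrow> x = 0)
     \<and> (\<forall>a x. nv (scale a x) = av a * nv x)
     \<and> (\<forall>x y. nv (x + y) \<le> max (nv x) (nv y))"

definition orthogonal_set :: "('k::field \<Rightarrow> 'v::ab_group_add \<Rightarrow> 'v) \<Rightarrow> ('v \<Rightarrow> real) \<Rightarrow> 'v set \<Rightarrow> bool" where
  "orthogonal_set scale nv X \<longleftrightarrow> 0 \<notin> X \<and>
     (\<forall>F (c :: 'v \<Rightarrow> 'k). finite F \<and> F \<subseteq> X \<and> F \<noteq> {} \<longrightarrow>
        nv (\<Sum>x\<in>F. scale (c x) x) = (MAX x\<in>F. nv (scale (c x) x)))"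

definition maximal_orthogonal_set :: "('k::field \<Rightarrow> 'v::ab_group_add \<Rightarrow> 'v) \<Rightarrow> ('v \<Rightarrow> real) \<Rightarrow> 'v set \<Rightarrow> bool" where
  "maximal_orthogonal_set scale nv X \<longleftrightarrow> orthogonal_set scale nv X \<and>
     (\<forall>Y. orthogonal_set scale nv Y \<and> X \<subseteq> Y \<longrightarrow> Y = X)"

text \<open>The number written dim over K-vee of E-vee: cardinality of a maximal orthogonal subset.\<close>
definition orth_dim :: "('k::field \<Rightarrow> 'v::ab_group_add \<Rightarrow> 'v) \<Rightarrow> ('v \<Rightarrow> real) \<Rightarrow> nat" where
  "orth_dim scale nv = card (SOME X. maximal_orthogonal_set scale nv X)"

definition coset :: "('k::field \<Rightarrow> 'v::ab_group_add \<Rightarrow> 'v) \<Rightarrow> 'v \<Rightarrow> 'v \<Rightarrow> 'v set" where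
  "coset scale u x = {x + scale a u | a. True}"

definition quot_space :: "('k::field \<Rightarrow> 'v::ab_group_add \<Rightarrow> 'v) \<Rightarrow> 'v \<Rightarrow> 'v set set" where
  "quot_space scale u = range (coset scale u)"

definition quot_add :: "'v::ab_group_add set \<Rightarrow> 'v set \<Rightarrow> 'v set" where
  "quot_add C D = {c + d | c d. c \<in> C \<and> d \<in> D}"

definition quot_scale :: "('k::field \<Rightarrow> 'v::ab_group_add \<Rightarrow> 'v) \<Rightarrow> 'v \<Rightarrow> 'k \<Rightarrow> 'v set \<Rightarrow> 'v set" where
  "quot_scale scale u a C = {scale a c + scale b u | c b. c \<in> C}"

definition quot_norm :: "('v \<Rightarrow> real) \<Rightarrow> 'v set \<Rightarrow> real" where
  "quot_norm nv C = Inf (nv ` C)"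

definition quotients_isometric :: "('k::field \<Rightarrow> 'v::ab_group_add \<Rightarrow> 'v) \<Rightarrow> ('v \<Rightarrow> real) \<Rightarrow> 'v \<Rightarrow> 'v \<Rightarrow> bool" where
  "quotients_isometric scale nv u v \<longleftrightarrow> (\<exists>T.
     bij_betw T (quot_space scale u) (quot_space scale v)
     \<and> (\<forall>C\<in>quot_space scale u. \<forall>D\<in>quot_space scale u. T (quot_add C D) = quot_add (T C) (T D))
     \<and> (\<forall>a. \<forall>C\<in>quot_space scale u. T (quot_scale scale u a C) = quot_scale scale v a (T C))
     \<and> (\<forall>C\<in>quot_space scale u. quot_norm nv (T C) = quot_norm nv C))"

end

theory Submission
  imports Defs
begin

text \<open>Let \<open>{x\<^sub>0}\<close> be a maximal orthogonal set. For \<open>u \<noteq> 0\<close> the pair \<open>{x\<^sub>0, u}\<close> is not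
  orthogonal, which produces a multiple \<open>q\<close> of \<open>u\<close> with \<open>\<parallel>q - x\<^sub>0\<parallel> < \<parallel>x\<^sub>0\<parallel>\<close>.
  Over a complete field finite-dimensional subspaces are closed, so for every \<open>\<rho> < 1\<close> there
  is a linear functional \<open>f\<close> with \<open>f x\<^sub>0 = 1\<close> and \<open>\<rho> \<bar>f x\<bar> \<parallel>x\<^sub>0\<parallel> \<le> \<parallel>x\<parallel>\<close>; for \<open>\<rho>\<close> close
  to 1 the map \<open>x \<mapsto> x + f x (q - x\<^sub>0)\<close> moves every \<open>x \<noteq> 0\<close> by less than \<open>\<parallel>x\<parallel>\<close>, hence
  is a linear isometric automorphism sending \<open>x\<^sub>0\<close> to \<open>q\<close>. So all lines \<open>[u]\<close> lie in one
  orbit of the isometry group, and an isometric automorphism carrying \<open>[u]\<close> onto \<open>[w]\<close>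
  induces an isometric isomorphism \<open>E/[u] \<cong> E/[w]\<close>.\<close>

lemma eventually_inverse_Suc_less:
  assumes "e > 0"
  shows "\<exists>N. \<forall>k\<ge>N. inverse (real (Suc k)) < e"
proof -
  obtain N where N: "inverse (real (Suc N)) < e"
    using reals_Archimedean assms by blast
  have "inverse (real (Suc k)) \<le> inverse (real (Suc N))" if "k \<ge> N" for k
    using that by (intro le_imp_inverse_le) simp_all
  with N show ?thesis
    by (meson order.strict_trans1)
qed

locale na_normed_space = vector_space scale
  for scale :: "'k::field \<Rightarrow> 'v::ab_group_add \<Rightarrow> 'v" +
  fixes av :: "'k \<Rightarrow> real" and nv :: "'v \<Rightarrow> real"
  assumes na_abs: "na_abs av" and na_norm: "na_norm av scale nv"
begin

sublocale endo: vector_space_pair scale scale ..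

sublocale dual: vector_space_pair scale "(*) :: 'k \<Rightarrow> 'k \<Rightarrow> 'k"
  by unfold_locales (simp_all add: algebra_simps)

lemma av_nonneg: "av a \<ge> 0"
  using na_abs by (simp add: na_abs_def)

lemma av_zero_iff [simp]: "av a = 0 \<longleftrightarrow> a = 0"
  using na_abs by (simp add: na_abs_def)

lemma av_mult: "av (a * b) = av a * av b"
  using na_abs by (simp add: na_abs_def)

lemma av_zero [simp]: "av 0 = 0"
  by simp

lemma av_pos: "a \<noteq> 0 \<Longrightarrow> av a > 0"
  using av_nonneg[of a] by (metis av_zero_iff order_less_le)

lemma av_one [simp]: "av 1 = 1"
  using av_mult[of 1 1] by simp

lemma av_minus_one [simp]: "av (- 1) = 1"
proof -
  have "av (- 1) * av (- 1) = 1"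
    using av_mult[of "- 1" "- 1"] by simp
  then show ?thesis
    using av_nonneg[of "- 1"] by (metis abs_of_nonneg abs_square_eq_1 power2_eq_square)
qed

lemma nv_nonneg: "nv x \<ge> 0"
  using na_norm by (simp add: na_norm_def)

lemma nv_zero_iff [simp]: "nv x = 0 \<longleftrightarrow> x = 0"
  using na_norm by (simp add: na_norm_def)

lemma nv_zero [simp]: "nv 0 = 0"
  by simp

lemma nv_pos: "x \<noteq> 0 \<Longrightarrow> nv x > 0"
  using nv_nonneg[of x] by (metis nv_zero_iff order_less_le)

lemma nv_scale: "nv (scale a x) = av a * nv x"
  using na_norm by (simp add: na_norm_def)

lemma nv_add: "nv (x + y) \<le> max (nv x) (nv y)"
  using na_norm by (simp add: na_norm_def)

lemma nv_uminus [simp]: "nv (- x) = nv x"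
  using nv_scale[of "- 1" x] by simp

lemma nv_diff: "nv (x - y) \<le> max (nv x) (nv y)"
  using nv_add[of x "- y"] by simp

lemma nv_add_strict:
  assumes "nv y < nv x"
  shows "nv (x + y) = nv x"
proof -
  have "nv (x + y) \<le> nv x"
    using nv_add[of x y] assms by simp
  moreover have "nv x \<le> max (nv (x + y)) (nv y)"
    using nv_diff[of "x + y" y] by simp
  ultimately show ?thesis
    using assms by linarith
qed

lemma nv_add_eq_max:
  assumes "nv x \<noteq> nv y"
  shows "nv (x + y) = max (nv x) (nv y)"
proof (cases "nv y < nv x")
  case True
  then show ?thesis by (simp add: nv_add_strict)
next
  case False
  then show ?thesis
    using assms nv_add_strict[of x y] by (simp add: add.commute)
qed

lemma scale_dist_le_norm_add:
  assumes "subspace W" and dist: "\<And>v. v \<in> W \<Longrightarrow> D \<le> nv (y - v)" and "w \<in> W"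
  shows "av b * D \<le> nv (w + scale b y)"
proof (cases "b = 0")
  case True
  then show ?thesis by (simp add: nv_nonneg)
next
  case False
  define v where "v = scale (- inverse b) w"
  have "v \<in> W"
    using assms(1,3) unfolding v_def by (rule subspace_scale)
  then have "av b * D \<le> av b * nv (y - v)"
    using dist av_nonneg by (simp add: mult_left_mono)
  also have "\<dots> = nv (w + scale b y)"
    using False by (simp add: v_def nv_scale[symmetric] algebra_simps)
  finally show ?thesis .
qed

lemma approximation_coefficients_Cauchy:
  assumes "subspace W" and "\<delta> > 0" and dist: "\<And>u. u \<in> W \<Longrightarrow> \<delta> \<le> nv (v - u)"
    and w: "\<And>k. w k \<in> W" and approx: "\<And>k. nv (y - w k - scale (l k) v) < inverse (real (Suc k))"
  shows "\<forall>e>0. \<exists>N. \<forall>m\<ge>N. \<forall>n\<ge>N. av (l m - l n) < e"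
proof (intro allI impI)
  fix e :: real
  assume "e > 0"
  then obtain N where N: "\<forall>k\<ge>N. inverse (real (Suc k)) < e * \<delta>"
    using eventually_inverse_Suc_less \<open>\<delta> > 0\<close> by (meson mult_pos_pos)
  have "av (l m - l n) < e" if "m \<ge> N" "n \<ge> N" for m n
  proof -
    have "(y - w n - scale (l n) v) - (y - w m - scale (l m) v) = (w m - w n) + scale (l m - l n) v"
      by (simp add: algebra_simps)
    then have "nv ((w m - w n) + scale (l m - l n) v)
        \<le> max (nv (y - w n - scale (l n) v)) (nv (y - w m - scale (l m) v))"
      by (metis nv_diff)
    also have "\<dots> < e * \<delta>"
      using approx[of m] approx[of n] N that by (meson less_trans max_less_iff_conj)
    finally have "nv ((w m - w n) + scale (l m - l n) v) < e * \<delta>" .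
    moreover have "av (l m - l n) * \<delta> \<le> nv ((w m - w n) + scale (l m - l n) v)"
      using scale_dist_le_norm_add[OF \<open>subspace W\<close> dist] w \<open>subspace W\<close> by (simp add: subspace_diff)
    ultimately show ?thesis
      using \<open>\<delta> > 0\<close> by (meson mult_less_cancel_right_pos order.strict_trans1)
  qed
  then show "\<exists>N. \<forall>m\<ge>N. \<forall>n\<ge>N. av (l m - l n) < e"
    by blast
qed

lemma approximation_limit:
  assumes w: "\<And>k. w k \<in> W" and approx: "\<And>k. nv (y - w k - scale (l k) v) < inverse (real (Suc k))"
    and L: "\<forall>e>0. \<exists>N. \<forall>n\<ge>N. av (l n - L) < e" and "v \<noteq> 0" and "\<delta> > 0"
  obtains u where "u \<in> W" and "nv (y - scale L v - u) < \<delta>"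
proof -
  obtain N\<^sub>1 where N\<^sub>1: "\<forall>n\<ge>N\<^sub>1. av (l n - L) < \<delta> / nv v"
    using L divide_pos_pos[OF \<open>\<delta> > 0\<close> nv_pos[OF \<open>v \<noteq> 0\<close>]] by blast
  obtain N\<^sub>2 where N\<^sub>2: "\<forall>n\<ge>N\<^sub>2. inverse (real (Suc n)) < \<delta>"
    using eventually_inverse_Suc_less \<open>\<delta> > 0\<close> by blast
  define n where "n = max N\<^sub>1 N\<^sub>2"
  have "nv (scale (l n - L) v) < \<delta>"
    using N\<^sub>1 nv_pos[OF \<open>v \<noteq> 0\<close>] by (simp add: n_def nv_scale pos_less_divide_eq)
  moreover have "nv (y - w n - scale (l n) v) < \<delta>"
    using approx[of n] N\<^sub>2 by (metis n_def max.cobounded2 less_trans)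
  moreover have "y - scale L v - w n = (y - w n - scale (l n) v) + scale (l n - L) v"
    by (simp add: algebra_simps)
  ultimately have "nv (y - scale L v - w n) < \<delta>"
    using nv_add[of "y - w n - scale (l n) v" "scale (l n - L) v"]
    by (metis max_less_iff_conj order.strict_trans1)
  then show thesis
    using that w by blast
qed

lemma almost_orthogonal_complement:
  assumes "subspace W" and "v\<^sub>0 \<in> W" and "0 \<le> \<sigma>" and "\<sigma> \<le> 1"
    and near: "\<And>v. v \<in> W \<Longrightarrow> \<sigma> * nv (y - v\<^sub>0) \<le> nv (y - v)" and "x \<in> W"
  shows "\<sigma> * nv x \<le> nv (x + scale b (y - v\<^sub>0))"
proof -
  have "x - scale b v\<^sub>0 \<in> W"
    using assms(1,2,6) by (simp add: subspace_diff subspace_scale)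
  then have "av b * (\<sigma> * nv (y - v\<^sub>0)) \<le> nv ((x - scale b v\<^sub>0) + scale b y)"
    using near by (intro scale_dist_le_norm_add[OF \<open>subspace W\<close>])
  moreover have "(x - scale b v\<^sub>0) + scale b y = x + scale b (y - v\<^sub>0)"
    by (simp add: algebra_simps)
  ultimately have far: "\<sigma> * nv (scale b (y - v\<^sub>0)) \<le> nv (x + scale b (y - v\<^sub>0))"
    by (simp add: nv_scale mult.left_commute)
  have "nv x \<le> nv (x + scale b (y - v\<^sub>0)) \<or> nv x \<le> nv (scale b (y - v\<^sub>0))"
    using nv_diff[of "x + scale b (y - v\<^sub>0)" "scale b (y - v\<^sub>0)"] by (simp add: le_max_iff_disj)
  then show ?thesis
  proof
    assume "nv x \<le> nv (x + scale b (y - v\<^sub>0))"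
    moreover have "\<sigma> * nv x \<le> nv x"
      using assms(3,4) nv_nonneg[of x] by (intro mult_left_le_one_le)
    ultimately show ?thesis
      by linarith
  next
    assume "nv x \<le> nv (scale b (y - v\<^sub>0))"
    then show ?thesis
      using far assms(3) by (meson mult_left_mono order_trans)
  qed
qed

lemma linear_functional_separating:
  assumes "y \<notin> span T"
  obtains \<beta> where "Vector_Spaces.linear scale (*) \<beta>" and "\<beta> y = 1"
    and "\<And>x. x \<in> span T \<Longrightarrow> \<beta> x = 0"
proof -
  obtain B where "B \<subseteq> span T" "independent B" "span T \<subseteq> span B"
    using maximal_independent_subset by blast
  have span_B: "span B = span T"
    using span_minimal[OF \<open>B \<subseteq> span T\<close> subspace_span] \<open>span T \<subseteq> span B\<close> by (rule antisym)
  then have "independent (insert y B)"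
    using assms \<open>independent B\<close> by (simp add: independent_insertI)
  then obtain \<beta> where \<beta>: "Vector_Spaces.linear scale (*) \<beta>"
    and "\<forall>x\<in>insert y B. \<beta> x = (if x = y then 1 else 0)"
    using dual.linear_independent_extend[of "insert y B" "\<lambda>x. if x = y then 1 else 0"] by blast
  then have "\<beta> y = 1" and "\<forall>x\<in>B. \<beta> x = 0"
    using assms span_B span_superset by auto
  then show thesis
    using that[OF \<beta>] dual.linear_eq_0_on_span[OF \<beta>] span_B by blast
qed

lemma norming_functional_on_line:
  assumes "p \<noteq> 0"
  obtains f where "Vector_Spaces.linear scale (*) f" and "f p = 1"
    and "\<And>x. x \<in> span {p} \<Longrightarrow> av (f x) * nv p = nv x"
proof -
  obtain f where f: "Vector_Spaces.linear scale (*) f" and "f p = 1"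
    using linear_functional_separating[of p "{}"] assms by auto
  have "av (f x) * nv p = nv x" if "x \<in> span {p}" for x
  proof -
    obtain b where "x = scale b p"
      using \<open>x \<in> span {p}\<close> by (auto simp: span_singleton)
    then show ?thesis
      using f \<open>f p = 1\<close> by (simp add: dual.linear_scale nv_scale)
  qed
  then show thesis
    using that f \<open>f p = 1\<close> by blast
qed

lemma orthogonal_set_independent:
  assumes "orthogonal_set scale nv X"
  shows "independent X"
proof
  assume "dependent X"
  then obtain T c v where "finite T" "T \<subseteq> X" and sum: "(\<Sum>x\<in>T. scale (c x) x) = 0"
    and "v \<in> T" "c v \<noteq> 0"
    unfolding dependent_explicit by blast
  have "v \<noteq> 0"
    using assms \<open>v \<in> T\<close> \<open>T \<subseteq> X\<close> unfolding orthogonal_set_def by blast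
  have "0 < nv (scale (c v) v)"
    using \<open>c v \<noteq> 0\<close> \<open>v \<noteq> 0\<close> by (intro nv_pos) simp
  also have "\<dots> \<le> (MAX x\<in>T. nv (scale (c x) x))"
    using \<open>finite T\<close> \<open>v \<in> T\<close> by simp
  also have "\<dots> = nv (\<Sum>x\<in>T. scale (c x) x)"
    using assms \<open>finite T\<close> \<open>T \<subseteq> X\<close> \<open>v \<in> T\<close> unfolding orthogonal_set_def by auto
  finally show False
    using sum by simp
qed

lemma non_orthogonal_pair_close_multiple:
  assumes "x\<^sub>0 \<noteq> 0" and "u \<noteq> 0" and "\<not> orthogonal_set scale nv {x\<^sub>0, u}"
  obtains k where "k \<noteq> 0" and "nv (scale k u - x\<^sub>0) < nv x\<^sub>0"
proof -
  obtain F c where "F \<subseteq> {x\<^sub>0, u}" "F \<noteq> {}"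
    and F: "nv (\<Sum>x\<in>F. scale (c x) x) \<noteq> (MAX x\<in>F. nv (scale (c x) x))"
    using assms unfolding orthogonal_set_def by blast
  then have "F = {x\<^sub>0} \<or> F = {u} \<or> F = {x\<^sub>0, u}"
    by blast
  moreover have "F \<noteq> {z}" for z
    using F by auto
  ultimately have "F = {x\<^sub>0, u}" and "x\<^sub>0 \<noteq> u"
    by auto
  define a b where "a = c x\<^sub>0" and "b = c u"
  have "nv (scale a x\<^sub>0 + scale b u) \<noteq> max (nv (scale a x\<^sub>0)) (nv (scale b u))"
    using F \<open>F = {x\<^sub>0, u}\<close> \<open>x\<^sub>0 \<noteq> u\<close> by (simp add: a_def b_def)
  then have eq: "nv (scale a x\<^sub>0) = nv (scale b u)"
    and less: "nv (scale a x\<^sub>0 + scale b u) < nv (scale a x\<^sub>0)"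
    using nv_add_eq_max nv_add[of "scale a x\<^sub>0" "scale b u"] by force+
  have "a \<noteq> 0" and "b \<noteq> 0"
    using less eq nv_nonneg[of "scale a x\<^sub>0 + scale b u"] by auto
  show thesis
  proof
    show "- (b / a) \<noteq> 0"
      using \<open>a \<noteq> 0\<close> \<open>b \<noteq> 0\<close> by simp
    have "scale (- (b / a)) u - x\<^sub>0 = scale (- inverse a) (scale a x\<^sub>0 + scale b u)"
      using \<open>a \<noteq> 0\<close> by (simp add: algebra_simps divide_inverse)
    then have "nv (scale (- (b / a)) u - x\<^sub>0) = av (inverse a) * nv (scale a x\<^sub>0 + scale b u)"
      by (simp add: nv_scale)
    also have "\<dots> < av (inverse a) * nv (scale a x\<^sub>0)"
      using less \<open>a \<noteq> 0\<close> by (simp add: av_pos)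
    also have "\<dots> = nv x\<^sub>0"
      using \<open>a \<noteq> 0\<close> by (simp add: nv_scale mult.assoc av_mult[symmetric])
    finally show "nv (scale (- (b / a)) u - x\<^sub>0) < nv x\<^sub>0" .
  qed
qed

definition isometric_automorphism :: "('v \<Rightarrow> 'v) \<Rightarrow> bool" where
  "isometric_automorphism A \<longleftrightarrow>
     Vector_Spaces.linear scale scale A \<and> bij A \<and> (\<forall>x. nv (A x) = nv x)"

lemma isometric_automorphism_id: "isometric_automorphism id"
  by (simp add: isometric_automorphism_def linear_id)

lemma isometric_automorphism_comp:
  "isometric_automorphism A \<Longrightarrow> isometric_automorphism B \<Longrightarrow> isometric_automorphism (A \<circ> B)"
  unfolding isometric_automorphism_def by (auto intro: Vector_Spaces.linear_compose bij_comp)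

lemma isometric_automorphism_inv:
  assumes "isometric_automorphism A"
  shows "isometric_automorphism (inv A)"
proof -
  have "nv (inv A y) = nv y" for y
    using assms unfolding isometric_automorphism_def by (metis bij_inv_eq_iff)
  then show ?thesis
    using assms unfolding isometric_automorphism_def module_hom_iff_linear[symmetric]
    by (simp add: bij_module_hom_imp_inv_module_hom bij_imp_bij_inv)
qed

lemma isometric_automorphism_between_lines:
  assumes A: "isometric_automorphism A" "A x\<^sub>0 = scale c u" "c \<noteq> 0"
    and A': "isometric_automorphism A'" "A' x\<^sub>0 = scale c' w"
  shows "isometric_automorphism (A' \<circ> inv A)" and "(A' \<circ> inv A) u = scale (c' / c) w"
proof -
  show "isometric_automorphism (A' \<circ> inv A)"
    using A(1) A'(1) by (simp add: isometric_automorphism_comp isometric_automorphism_inv)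
  have "A (scale (inverse c) x\<^sub>0) = u"
    using A unfolding isometric_automorphism_def by (simp add: endo.linear_scale)
  then have "inv A u = scale (inverse c) x\<^sub>0"
    using A(1) unfolding isometric_automorphism_def by (metis bij_inv_eq_iff)
  then show "(A' \<circ> inv A) u = scale (c' / c) w"
    using A'
    unfolding isometric_automorphism_def by (simp add: endo.linear_scale divide_inverse mult.commute)
qed

lemma image_coset:
  assumes "Vector_Spaces.linear scale scale A" and "c \<noteq> 0" and "A u = scale c w"
  shows "A ` coset scale u x = coset scale w (A x)"
proof (intro equalityI subsetI)
  fix z
  assume "z \<in> A ` coset scale u x"
  then obtain b where "z = A (x + scale b u)"
    unfolding coset_def by auto
  also have "\<dots> = A x + scale (b * c) w"
    using assms by (simp add: endo.linear_add endo.linear_scale)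
  finally show "z \<in> coset scale w (A x)"
    unfolding coset_def by blast
next
  fix z
  assume "z \<in> coset scale w (A x)"
  then obtain b where "z = A x + scale b w"
    unfolding coset_def by auto
  also have "\<dots> = A (x + scale (b / c) u)"
    using assms by (simp add: endo.linear_add endo.linear_scale)
  finally show "z \<in> A ` coset scale u x"
    unfolding coset_def by blast
qed

lemma image_quot_add:
  assumes "Vector_Spaces.linear scale scale A"
  shows "A ` quot_add C D = quot_add (A ` C) (A ` D)"
proof (intro equalityI subsetI)
  fix z
  assume "z \<in> A ` quot_add C D"
  then obtain x y where "x \<in> C" "y \<in> D" "z = A (x + y)"
    unfolding quot_add_def by auto
  then show "z \<in> quot_add (A ` C) (A ` D)"
    using assms unfolding quot_add_def by (auto simp: endo.linear_add)
next
  fix z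
  assume "z \<in> quot_add (A ` C) (A ` D)"
  then obtain x y where "x \<in> C" "y \<in> D" "z = A x + A y"
    unfolding quot_add_def by auto
  then have "z = A (x + y)" and "x + y \<in> quot_add C D"
    using assms unfolding quot_add_def by (auto simp: endo.linear_add)
  then show "z \<in> A ` quot_add C D"
    by blast
qed

lemma image_quot_scale:
  assumes "Vector_Spaces.linear scale scale A" and "c \<noteq> 0" and "A u = scale c w"
  shows "A ` quot_scale scale u a C = quot_scale scale w a (A ` C)"
proof (intro equalityI subsetI)
  fix z
  assume "z \<in> A ` quot_scale scale u a C"
  then obtain x b where "x \<in> C" and "z = A (scale a x + scale b u)"
    unfolding quot_scale_def by auto
  moreover have "A (scale a x + scale b u) = scale a (A x) + scale (b * c) w"
    using assms by (simp add: endo.linear_add endo.linear_scale)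
  ultimately show "z \<in> quot_scale scale w a (A ` C)"
    unfolding quot_scale_def by blast
next
  fix z
  assume "z \<in> quot_scale scale w a (A ` C)"
  then obtain x b where "x \<in> C" and "z = scale a (A x) + scale b w"
    unfolding quot_scale_def by auto
  moreover have "A (scale a x + scale (b / c) u) = scale a (A x) + scale b w"
    using assms by (simp add: endo.linear_add endo.linear_scale)
  moreover have "scale a x + scale (b / c) u \<in> quot_scale scale u a C"
    unfolding quot_scale_def using \<open>x \<in> C\<close> by blast
  ultimately show "z \<in> A ` quot_scale scale u a C"
    by (metis image_eqI)
qed

lemma quotients_isometric_if_automorphism:
  assumes A: "isometric_automorphism A" and "c \<noteq> 0" and "A u = scale c w"
  shows "quotients_isometric scale nv u w"
proof -
  have lin: "Vector_Spaces.linear scale scale A" and "bij A" and isom: "\<And>x. nv (A x) = nv x"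
    using A unfolding isometric_automorphism_def by auto
  have image_coset': "image A (coset scale u x) = coset scale w (A x)" for x
    using lin \<open>c \<noteq> 0\<close> \<open>A u = scale c w\<close> by (rule image_coset)
  show ?thesis
    unfolding quotients_isometric_def
  proof (intro exI[of _ "image A"] conjI ballI allI)
    have "image A ` quot_space scale u = range (\<lambda>x. coset scale w (A x))"
      unfolding quot_space_def image_image image_coset' ..
    also have "\<dots> = quot_space scale w"
      unfolding quot_space_def using \<open>bij A\<close> by (metis bij_is_surj image_image)
    finally show "bij_betw (image A) (quot_space scale u) (quot_space scale w)"
      using \<open>bij A\<close> by (intro bij_betw_imageI inj_onI) (simp_all add: inj_image_eq_iff bij_is_inj)
    show "A ` quot_add C D = quot_add (A ` C) (A ` D)" for C D
      using lin by (rule image_quot_add)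
    show "A ` quot_scale scale u a C = quot_scale scale w a (A ` C)" for a C
      using lin \<open>c \<noteq> 0\<close> \<open>A u = scale c w\<close> by (rule image_quot_scale)
    show "quot_norm nv (A ` C) = quot_norm nv C" for C
      unfolding quot_norm_def image_image isom ..
  qed
qed

end

locale complete_na_normed_space = na_normed_space +
  assumes complete: "abs_complete av"
begin

lemma span_dist_pos:
  assumes "finite S" and "y \<notin> span S"
  shows "\<exists>\<delta>>0. \<forall>v\<in>span S. \<delta> \<le> nv (y - v)"
  using assms
proof (induction S arbitrary: y rule: finite_induct)
  case empty
  then show ?case by (intro exI[of _ "nv y"]) (auto intro: nv_pos)
next
  case (insert v S)
  show ?case
  proof (cases "v \<in> span S")
    case True
    then show ?thesis using insert span_redundant by metis
  next
    case False
    obtain \<delta>\<^sub>v where "\<delta>\<^sub>v > 0" and \<delta>\<^sub>v: "\<And>u. u \<in> span S \<Longrightarrow> \<delta>\<^sub>v \<le> nv (v - u)"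
      using insert.IH[OF False] by blast
    \<comment> \<open>Approximants \<open>w k + l k v\<close> of \<open>y\<close> have Cauchy coefficients because \<open>v\<close> is at positive
      distance from \<open>span S\<close>; with the limit \<open>L\<close>, the point \<open>y - L v\<close> is then approximated
      from \<open>span S\<close>.\<close>
    show ?thesis
    proof (rule ccontr)
      assume "\<not> ?thesis"
      then have "\<forall>k. \<exists>z\<in>span (insert v S). nv (y - z) < inverse (real (Suc k))"
        by (meson not_le positive_imp_inverse_positive of_nat_0_less_iff zero_less_Suc)
      then have "\<forall>k. \<exists>w l. w \<in> span S \<and> nv (y - w - scale l v) < inverse (real (Suc k))"
        by (metis span_breakdown_eq diff_diff_eq add.commute diff_add_cancel)
      then obtain w l where w: "\<And>k. w k \<in> span S"
        and approx: "\<And>k. nv (y - w k - scale (l k) v) < inverse (real (Suc k))"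
        by metis
      obtain L where L: "\<forall>e>0. \<exists>N. \<forall>n\<ge>N. av (l n - L) < e"
        using approximation_coefficients_Cauchy[OF subspace_span \<open>\<delta>\<^sub>v > 0\<close> \<delta>\<^sub>v w approx] complete
        unfolding abs_complete_def by blast
      have "y - scale L v \<notin> span S"
        using insert.prems span_breakdown_eq by blast
      then obtain \<delta> where "\<delta> > 0" and \<delta>: "\<And>u. u \<in> span S \<Longrightarrow> \<delta> \<le> nv (y - scale L v - u)"
        using insert.IH by blast
      have "v \<noteq> 0"
        using False span_zero by metis
      then obtain u where "u \<in> span S" and "nv (y - scale L v - u) < \<delta>"
        using approximation_limit[OF w approx L _ \<open>\<delta> > 0\<close>] by blast
      then show False
        using \<delta> not_le by blast
    qed
  qed
qed

lemma near_nearest_point: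
  assumes "finite T" and "y \<notin> span T" and "0 < \<sigma>" and "\<sigma> < 1"
  obtains v\<^sub>0 where "v\<^sub>0 \<in> span T" and "\<And>v. v \<in> span T \<Longrightarrow> \<sigma> * nv (y - v\<^sub>0) \<le> nv (y - v)"
proof -
  define D where "D = Inf ((\<lambda>v. nv (y - v)) ` span T)"
  have nonempty: "(\<lambda>v. nv (y - v)) ` span T \<noteq> {}"
    using span_zero by blast
  have bdd: "bdd_below ((\<lambda>v. nv (y - v)) ` span T)"
    by (rule bdd_belowI2[where m = 0]) (rule nv_nonneg)
  have D_le: "D \<le> nv (y - v)" if "v \<in> span T" for v
    unfolding D_def using bdd that by (auto intro: cInf_lower)
  obtain \<delta> where "\<delta> > 0" and "\<forall>v\<in>span T. \<delta> \<le> nv (y - v)"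
    using span_dist_pos assms(1,2) by blast
  then have "\<delta> \<le> D"
    unfolding D_def using nonempty by (auto intro: cInf_greatest)
  then have "D < D / \<sigma>"
    using \<open>\<delta> > 0\<close> assms(3,4) by (simp add: field_simps)
  then obtain v\<^sub>0 where "v\<^sub>0 \<in> span T" and "nv (y - v\<^sub>0) < D / \<sigma>"
    using cInf_less_iff[OF nonempty bdd] unfolding D_def[symmetric] by auto
  then have "\<sigma> * nv (y - v\<^sub>0) \<le> D"
    using assms(3) by (simp add: field_simps)
  then show thesis
    using that[OF \<open>v\<^sub>0 \<in> span T\<close>] D_le by fastforce
qed

lemma bounded_projection:
  assumes "finite T" and "y \<notin> span T" and "0 < \<sigma>" and "\<sigma> < 1"
  obtains P where "Vector_Spaces.linear scale scale P" and "\<And>x. x \<in> span T \<Longrightarrow> P x = x"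
    and "\<And>z. z \<in> span (insert y T) \<Longrightarrow> P z \<in> span T \<and> \<sigma> * nv (P z) \<le> nv z"
proof -
  obtain v\<^sub>0 where "v\<^sub>0 \<in> span T" and near: "\<And>v. v \<in> span T \<Longrightarrow> \<sigma> * nv (y - v\<^sub>0) \<le> nv (y - v)"
    using near_nearest_point assms by blast
  obtain \<beta> where \<beta>: "Vector_Spaces.linear scale (*) \<beta>" and "\<beta> y = 1"
    and \<beta>_T: "\<And>x. x \<in> span T \<Longrightarrow> \<beta> x = 0"
    using linear_functional_separating[OF assms(2)] by blast
  define P where "P z = z - scale (\<beta> z) (y - v\<^sub>0)" for z
  show thesis
  proof
    show "Vector_Spaces.linear scale scale P"
      unfolding P_def
      using endo.linear_compose_sub[OF linear_ident endo.linear_compose_scale[OF \<beta>]] .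
    show "P x = x" if "x \<in> span T" for x
      using \<beta>_T[OF that] by (simp add: P_def)
    fix z
    assume "z \<in> span (insert y T)"
    then obtain b where b: "z - scale b y \<in> span T"
      using span_breakdown_eq by blast
    have "\<beta> z = \<beta> (z - scale b y) + b * \<beta> y"
      using \<beta> by (simp add: dual.linear_diff dual.linear_scale)
    then have "\<beta> z = b"
      using \<beta>_T[OF b] \<open>\<beta> y = 1\<close> by simp
    then have "P z = (z - scale b y) + scale b v\<^sub>0"
      by (simp add: P_def algebra_simps)
    then have "P z \<in> span T"
      using b \<open>v\<^sub>0 \<in> span T\<close> by (simp add: span_add span_scale)
    moreover have "z = P z + scale b (y - v\<^sub>0)"
      using \<open>\<beta> z = b\<close> by (simp add: P_def)
    ultimately show "P z \<in> span T \<and> \<sigma> * nv (P z) \<le> nv z"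
      using almost_orthogonal_complement[OF subspace_span \<open>v\<^sub>0 \<in> span T\<close> _ _ near] assms(3,4)
      by (metis less_imp_le)
  qed
qed

lemma near_norming_functional_extend:
  assumes "finite T" and "p \<in> T" and "y \<notin> span T" and "0 < \<sigma>" and "\<sigma> < 1"
    and f: "Vector_Spaces.linear scale (*) f" "f p = 1"
    and f_bound: "\<And>x. x \<in> span T \<Longrightarrow> \<rho> * av (f x) * nv p \<le> nv x"
  obtains g where "Vector_Spaces.linear scale (*) g" and "g p = 1"
    and "\<And>x. x \<in> span (insert y T) \<Longrightarrow> \<sigma> * \<rho> * av (g x) * nv p \<le> nv x"
proof -
  obtain P where P: "Vector_Spaces.linear scale scale P" and P_id: "\<And>x. x \<in> span T \<Longrightarrow> P x = x"
    and P_bound: "\<And>z. z \<in> span (insert y T) \<Longrightarrow> P z \<in> span T \<and> \<sigma> * nv (P z) \<le> nv z"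
    using bounded_projection[OF assms(1,3-5)] by blast
  show thesis
  proof
    show "Vector_Spaces.linear scale (*) (f \<circ> P)"
      using P f(1) by (rule Vector_Spaces.linear_compose)
    show "(f \<circ> P) p = 1"
      using P_id[OF span_base[OF \<open>p \<in> T\<close>]] f(2) by simp
    fix x
    assume "x \<in> span (insert y T)"
    then have "P x \<in> span T" and "\<sigma> * nv (P x) \<le> nv x"
      using P_bound by simp_all
    moreover have "\<sigma> * (\<rho> * av (f (P x)) * nv p) \<le> \<sigma> * nv (P x)"
      using f_bound[OF \<open>P x \<in> span T\<close>] \<open>0 < \<sigma>\<close> by simp
    ultimately show "\<sigma> * \<rho> * av ((f \<circ> P) x) * nv p \<le> nv x"
      by (simp add: mult.assoc)
  qed
qed

lemma near_norming_functional:
  assumes "finite S" and "p \<noteq> 0" and "0 < \<rho>" and "\<rho> < 1"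
  obtains f where "Vector_Spaces.linear scale (*) f" and "f p = 1"
    and "\<And>x. x \<in> span (insert p S) \<Longrightarrow> \<rho> * av (f x) * nv p \<le> nv x"
  using assms
proof (induction S arbitrary: \<rho> thesis rule: finite_induct)
  case empty
  obtain f where f: "Vector_Spaces.linear scale (*) f" "f p = 1"
    and exact: "\<And>x. x \<in> span {p} \<Longrightarrow> av (f x) * nv p = nv x"
    using norming_functional_on_line[OF \<open>p \<noteq> 0\<close>] by blast
  show ?case
  proof (rule empty.prems(1)[OF f])
    fix x
    assume "x \<in> span (insert p {})"
    then have "\<rho> * av (f x) * nv p = \<rho> * nv x"
      using exact by (simp add: mult.assoc)
    also have "\<dots> \<le> nv x"
      using \<open>0 < \<rho>\<close> \<open>\<rho> < 1\<close> nv_nonneg[of x] by (intro mult_left_le_one_le) simp_all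
    finally show "\<rho> * av (f x) * nv p \<le> nv x" .
  qed
next
  case (insert y S)
  show ?case
  proof (cases "y \<in> span (insert p S)")
    case True
    then have span_eq: "span (insert p (insert y S)) = span (insert p S)"
      by (metis insert_commute span_redundant)
    obtain f where f: "Vector_Spaces.linear scale (*) f" "f p = 1"
      and f_bound: "\<And>x. x \<in> span (insert p S) \<Longrightarrow> \<rho> * av (f x) * nv p \<le> nv x"
      using insert.IH[OF _ \<open>p \<noteq> 0\<close> \<open>0 < \<rho>\<close> \<open>\<rho> < 1\<close>] by blast
    show ?thesis
      by (rule insert.prems(1)[OF f f_bound[folded span_eq]])
  next
    case False
    define \<sigma> where "\<sigma> = sqrt \<rho>"
    have \<sigma>: "0 < \<sigma>" "\<sigma> < 1" "\<sigma> * \<sigma> = \<rho>"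
      using insert.prems by (auto simp: \<sigma>_def)
    obtain f where "Vector_Spaces.linear scale (*) f" "f p = 1"
      and "\<And>x. x \<in> span (insert p S) \<Longrightarrow> \<sigma> * av (f x) * nv p \<le> nv x"
      using insert.IH[OF _ \<open>p \<noteq> 0\<close> \<sigma>(1,2)] by blast
    then obtain g where g: "Vector_Spaces.linear scale (*) g" "g p = 1"
      and g_bound: "\<And>x. x \<in> span (insert y (insert p S)) \<Longrightarrow> \<sigma> * \<sigma> * av (g x) * nv p \<le> nv x"
      using near_norming_functional_extend[OF finite.insertI[OF insert.hyps(1)] insertI1 False \<sigma>(1,2)]
      by blast
    show ?thesis
    proof (rule insert.prems(1)[OF g])
      fix x
      assume "x \<in> span (insert p (insert y S))"
      then show "\<rho> * av (g x) * nv p \<le> nv x"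
        using g_bound[of x] \<sigma>(3) by (simp add: insert_commute)
    qed
  qed
qed

end

locale findim_na_normed_space =
  complete_na_normed_space scale av nv + finite_dimensional_vector_space scale Basis
  for scale :: "'k::field \<Rightarrow> 'v::ab_group_add \<Rightarrow> 'v" and av nv Basis
begin

lemma linear_isometry_bij:
  assumes "Vector_Spaces.linear scale scale A" and "\<And>x. nv (A x) = nv x"
  shows "bij A"
proof -
  have "x = 0" if "A x = 0" for x
    using assms(2)[of x] that by simp
  then have "inj A"
    using assms(1) by (simp add: endo.linear_inj_iff_eq_0)
  then show ?thesis
    using assms(1) linear_inj_imp_surj by (simp add: bij_def)
qed

lemma functional_with_small_norm:
  assumes "0 \<le> t" and "t < nv u"
  obtains f where "Vector_Spaces.linear scale (*) f" and "f u = 1"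
    and "\<And>x. x \<noteq> 0 \<Longrightarrow> av (f x) * t < nv x"
proof -
  define \<rho> where "\<rho> = (t + nv u) / (2 * nv u)"
  have "u \<noteq> 0" and "0 < \<rho>" "\<rho> < 1" "t < \<rho> * nv u"
    using assms by (auto simp: \<rho>_def field_simps)
  moreover have "span (insert u Basis) = UNIV"
    using span_Basis span_mono[of Basis "insert u Basis"] by auto
  ultimately obtain f where f: "Vector_Spaces.linear scale (*) f" "f u = 1"
    and f_bound: "\<And>x. \<rho> * av (f x) * nv u \<le> nv x"
    using near_norming_functional[OF finite_Basis] by (metis UNIV_I)
  have "av (f x) * t < nv x" if "x \<noteq> 0" for x
  proof (cases "f x = 0")
    case True
    then show ?thesis using nv_pos[OF that] by simp
  next
    case False
    then have "av (f x) * t < av (f x) * (\<rho> * nv u)"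
      using \<open>t < \<rho> * nv u\<close> by (simp add: av_pos)
    then show ?thesis
      using f_bound[of x] by (simp add: mult_ac)
  qed
  then show thesis
    using that f by blast
qed

lemma isometric_automorphism_moving:
  assumes "nv (w - u) < nv u"
  obtains A where "isometric_automorphism A" and "A u = w"
proof -
  obtain f where f: "Vector_Spaces.linear scale (*) f" "f u = 1"
    and small: "\<And>x. x \<noteq> 0 \<Longrightarrow> av (f x) * nv (w - u) < nv x"
    using functional_with_small_norm[OF nv_nonneg assms] by blast
  define A where "A x = x + scale (f x) (w - u)" for x
  have lin: "Vector_Spaces.linear scale scale A"
    unfolding A_def using endo.linear_compose_add[OF linear_ident endo.linear_compose_scale[OF f(1)]] .
  have isom: "nv (A x) = nv x" for x
  proof (cases "x = 0")
    case True
    then show ?thesis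
      using f(1) by (simp add: A_def dual.linear_0)
  next
    case False
    then show ?thesis
      unfolding A_def using small by (simp add: nv_add_strict nv_scale)
  qed
  show thesis
  proof
    show "isometric_automorphism A"
      unfolding isometric_automorphism_def using lin isom linear_isometry_bij by blast
    show "A u = w"
      using f(2) by (simp add: A_def)
  qed
qed

lemma maximal_orthogonal_set_exists: "\<exists>X. maximal_orthogonal_set scale nv X"
proof -
  have bounded: "finite X \<and> card X \<le> card Basis" if "orthogonal_set scale nv X" for X
    using independent_span_bound[OF finite_Basis orthogonal_set_independent[OF that]] span_Basis
    by simp
  have "orthogonal_set scale nv {}"
    unfolding orthogonal_set_def by auto
  then obtain X where X: "orthogonal_set scale nv X"
    and largest: "\<And>Y. orthogonal_set scale nv Y \<Longrightarrow> card Y \<le> card X"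
    using ex_has_greatest_nat[of "orthogonal_set scale nv" "{}" card "Suc (card Basis)"] bounded
    by (metis le_imp_less_Suc)
  have "Y = X" if "orthogonal_set scale nv Y" and "X \<subseteq> Y" for Y
    using bounded[OF that(1)] largest[OF that(1)] that(2) by (metis card_mono card_subset_eq le_antisym)
  then show ?thesis
    using X unfolding maximal_orthogonal_set_def by blast
qed

lemma orth_dim_1_singleton:
  assumes "orth_dim scale nv = 1"
  obtains x\<^sub>0 where "maximal_orthogonal_set scale nv {x\<^sub>0}"
proof -
  let ?X = "SOME X. maximal_orthogonal_set scale nv X"
  have "maximal_orthogonal_set scale nv ?X"
    using maximal_orthogonal_set_exists by (rule someI_ex)
  moreover obtain x\<^sub>0 where "?X = {x\<^sub>0}"
    using assms unfolding orth_dim_def by (rule card_1_singletonE)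
  ultimately show thesis
    using that by simp
qed

lemma automorphism_onto_line:
  assumes max: "maximal_orthogonal_set scale nv {x\<^sub>0}" and "u \<noteq> 0"
  obtains A c where "isometric_automorphism A" and "c \<noteq> 0" and "A x\<^sub>0 = scale c u"
proof (cases "orthogonal_set scale nv {x\<^sub>0, u}")
  case True
  then have "u = x\<^sub>0"
    using max unfolding maximal_orthogonal_set_def by blast
  then show thesis
    using that[of id 1] isometric_automorphism_id by simp
next
  case False
  have "x\<^sub>0 \<noteq> 0"
    using max unfolding maximal_orthogonal_set_def orthogonal_set_def by blast
  then obtain k where "k \<noteq> 0" and "nv (scale k u - x\<^sub>0) < nv x\<^sub>0"
    using non_orthogonal_pair_close_multiple \<open>u \<noteq> 0\<close> False by blast
  then show thesis
    using isometric_automorphism_moving that by blast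
qed

end

theorem mainTheorem9:
  fixes av :: "'k::field \<Rightarrow> real"
    and scale :: "'k \<Rightarrow> 'v::ab_group_add \<Rightarrow> 'v"
    and nv :: "'v \<Rightarrow> real"
    and n :: nat
  assumes "na_abs av" and "abs_nontrivial av" and "abs_complete av"
    and "\<not> spherically_complete av"
    and "vector_space scale"
    and "\<exists>B. finite B \<and> \<not> module.dependent scale B
              \<and> module.span scale B = UNIV \<and> card B = n"
    and "na_norm av scale nv"
    and "orth_dim scale nv = 1"
  shows "\<forall>u w. u \<noteq> 0 \<and> w \<noteq> 0 \<longrightarrow> quotients_isometric scale nv u w"
proof (intro allI impI)
  fix u w :: 'v
  assume "u \<noteq> 0 \<and> w \<noteq> 0"
  obtain B where "finite B" "\<not> module.dependent scale B" "module.span scale B = UNIV"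
    using assms(6) by blast
  then interpret findim_na_normed_space scale av nv B
    using assms(1,3,5,7)
    by unfold_locales (simp_all add: vector_space_def na_normed_space_axioms_def complete_na_normed_space_axioms_def)
  obtain x\<^sub>0 where "maximal_orthogonal_set scale nv {x\<^sub>0}"
    using assms(8) by (rule orth_dim_1_singleton)
  then obtain A c A' c' where "isometric_automorphism A" "c \<noteq> 0" "A x\<^sub>0 = scale c u"
    and "isometric_automorphism A'" "c' \<noteq> 0" "A' x\<^sub>0 = scale c' w"
    using automorphism_onto_line \<open>u \<noteq> 0 \<and> w \<noteq> 0\<close> by metis
  then show "quotients_isometric scale nv u w"
    using isometric_automorphism_between_lines quotients_isometric_if_automorphism
    by (metis divide_eq_0_iff)
qed

end
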